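(* Let $q>1$. For every integer $N\ge1$ and real $x\neq0$, $$H_{N+1}(x;q)=\frac{[N+1]_q}{N+1}\Big([2]_q x-\Big(\frac{2}{[2]_q}+(q-1)x^2\Big)D_x+\sum_{l=2}^{N}\frac{(1-q^2)^l x^{l+1}}{[2]_q^{\,l-1}[l+1]_q}D_x^{\,l}\Big)H_N(x;q),$$ where $D_x^l$ denotes the $l$-fold iterate of $D_x$ and the sum is empty for $N=1$.
   Context: For $n\ge 0$ let $[n]_q=\frac{q^n-1}{q-1}$, $[0]_q!=1$, $[n]_q!=[1]_q\cdots[n]_q$, and $e_q(z)=\sum_{n\ge0}z^n/[n]_q!$. The $q$-derivative is $D_xf(x)=\frac{f(qx)-f(x)}{(q-1)x}$. The $q$-Hermite polynomials $H_N(x;q)$ are defined by the identity of formal power series in $t$: $e^{-t^2}e_q([2]_q t x)=\sum_{N\ge0}H_N(x;q)\,t^N/[N]_q!$. *)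

theory Defs
  imports "HOL-Computational_Algebra.Formal_Power_Series"
begin

definition qnum :: "real \<Rightarrow> nat \<Rightarrow> real" where
  "qnum q n = (q ^ n - 1) / (q - 1)"

definition qfact :: "real \<Rightarrow> nat \<Rightarrow> real" where
  "qfact q n = (\<Prod>k=1..n. qnum q k)"

text \<open>q-exponential e_q(z) as a formal power series in t, with z = c t\<close>
definition qexp_fps :: "real \<Rightarrow> real \<Rightarrow> real fps" where
  "qexp_fps q c = Abs_fps (\<lambda>n. c ^ n / qfact q n)"

definition qderiv :: "real \<Rightarrow> (real \<Rightarrow> real) \<Rightarrow> real \<Rightarrow> real" where
  "qderiv q f x = (f (q * x) - f x) / ((q - 1) * x)"

text \<open>q-Hermite polynomials: e^{-t^2} e_q([2]_q t x) = sum_N H_N(x;q) t^N / [N]_q!\<close>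
definition qHermite :: "nat \<Rightarrow> real \<Rightarrow> real \<Rightarrow> real" where
  "qHermite N x q = qfact q N *
     fps_nth ((fps_compose (fps_exp 1) (- (fps_X ^ 2))) * qexp_fps q (qnum q 2 * x)) N"

end

theory Submission
  imports Defs
begin

unbundle fps_syntax

text \<open>
  Put h_N = H_N / [N]_q!, so that G(t) = e^(-t^2) e_q([2]_q x t) = \<Sum> h_N t^N.
  Since D_x merely shifts the coefficients of e_q(c x t), it acts on the Hermite coefficients by
  D_x h_N = [2]_q h_(N-1), hence D_x^l h_N = [2]_q^l h_(N-l). On the other hand the ordinary
  t-derivative of e_q(z t) is z W(t) e_q(z t) with W(t) = \<Sum> ((1 - q) z t)^l / [l+1]_q, which
  amounts to the convolution identity \<Sum>_(l\<le>n) (1 - q)^l / ([l+1]_q [n-l]_q!) = (n+1) / [n+1]_q!.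
  Comparing coefficients of t^N in G' = (-2t + [2]_q x W) G expresses (N+1) h_(N+1) through the
  h_(N-l), and these are the q-derivatives of h_N.
\<close>

lemma qnum_0 [simp]: "qnum q 0 = 0"
  by (simp add: qnum_def)

lemma qnum_two: "q \<noteq> 1 \<Longrightarrow> qnum q 2 = q + 1"
  by (simp add: qnum_def power2_eq_square field_simps)

lemma qnum_nonzero:
  assumes "q > 0" "q \<noteq> 1" "n \<ge> 1"
  shows "qnum q n \<noteq> 0"
  using assms power_eq_iff_eq_base[of n q 1] by (simp add: qnum_def)

lemma qnum_add: "qnum q (m + n) = qnum q m + q ^ m * qnum q n"
proof -
  have "qnum q m + q ^ m * qnum q n = ((q ^ m - 1) + q ^ m * (q ^ n - 1)) / (q - 1)"
    by (simp add: qnum_def add_divide_distrib)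
  also have "\<dots> = qnum q (m + n)"
    by (simp add: qnum_def power_add algebra_simps)
  finally show ?thesis ..
qed

lemma qfact_Suc: "qfact q (Suc n) = qfact q n * qnum q (Suc n)"
  by (simp add: qfact_def)

lemma qfact_nonzero: "q > 0 \<Longrightarrow> q \<noteq> 1 \<Longrightarrow> qfact q n \<noteq> 0"
  by (simp add: qfact_def qnum_nonzero)

definition qconv :: "real \<Rightarrow> nat \<Rightarrow> real" where
  "qconv q n = (\<Sum>l\<le>n. (1 - q) ^ l / qnum q (l + 1) / qfact q (n - l))"

lemma qconv_Suc:
  assumes q: "q > 0" "q \<noteq> 1"
  shows "qnum q (n + 2) * qconv q (Suc n) = 1 / qfact q (Suc n) + qconv q n"
proof -
  define s where "s l = (1 - q) ^ l / qnum q (l + 1)" for l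
  define e where "e m = 1 / qfact q m" for m
  have conv: "qconv q m = (\<Sum>l\<le>m. s l * e (m - l))" for m
    by (simp add: qconv_def s_def e_def)
  have s_qnum: "s l * qnum q (l + 1) = (1 - q) ^ l" for l
    using qnum_nonzero[OF q, of "l + 1"] by (simp add: s_def)
  have s_shift: "q ^ (l + 1) * s l = s l - (1 - q) ^ (l + 1)" for l
  proof -
    have q_pow: "q ^ (l + 1) = 1 + (q - 1) * qnum q (l + 1)"
      using q by (simp add: qnum_def)
    have "q ^ (l + 1) * s l = s l + (q - 1) * (s l * qnum q (l + 1))"
      unfolding q_pow by (simp add: algebra_simps)
    also have "\<dots> = s l - (1 - q) ^ (l + 1)"
      by (simp only: s_qnum) (simp add: algebra_simps)
    finally show ?thesis .
  qed
  have e_qnum: "qnum q (Suc m) * e (Suc m) = e m" for m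
    using qfact_nonzero[OF q, of m] qnum_nonzero[OF q, of "Suc m"] by (simp add: e_def qfact_Suc)
  \<comment> \<open>split [n+2]_q = [l+1]_q + q^(l+1) [n+1-l]_q inside every summand\<close>
  have "qnum q (n + 2) * qconv q (Suc n) =
      (\<Sum>l\<le>Suc n. (1 - q) ^ l * e (Suc n - l))
    + (\<Sum>l\<le>Suc n. q ^ (l + 1) * s l * (qnum q (Suc n - l) * e (Suc n - l)))"
    unfolding conv sum_distrib_left sum.distrib[symmetric]
  proof (rule sum.cong[OF refl])
    fix l assume "l \<in> {..Suc n}"
    then have "qnum q (n + 2) = qnum q (l + 1) + q ^ (l + 1) * qnum q (Suc n - l)"
      using qnum_add[of q "l + 1" "Suc n - l"] by simp
    then show "qnum q (n + 2) * (s l * e (Suc n - l)) =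
        (1 - q) ^ l * e (Suc n - l) + q ^ (l + 1) * s l * (qnum q (Suc n - l) * e (Suc n - l))"
      by (simp add: algebra_simps s_qnum[symmetric])
  qed
  also have "(\<Sum>l\<le>Suc n. q ^ (l + 1) * s l * (qnum q (Suc n - l) * e (Suc n - l)))
      = (\<Sum>l\<le>n. q ^ (l + 1) * s l * e (n - l))"
    by (simp add: Suc_diff_le e_qnum)
  also have "\<dots> = (\<Sum>l\<le>n. s l * e (n - l)) - (\<Sum>l\<le>n. (1 - q) ^ (l + 1) * e (n - l))"
    by (simp only: s_shift left_diff_distrib sum_subtractf)
  also have "(\<Sum>l\<le>Suc n. (1 - q) ^ l * e (Suc n - l))
      = e (Suc n) + (\<Sum>l\<le>n. (1 - q) ^ (l + 1) * e (n - l))"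
    by (subst sum.atMost_Suc_shift) simp
  finally show ?thesis
    by (simp add: conv e_def)
qed

lemma qconv_eq:
  assumes q: "q > 0" "q \<noteq> 1"
  shows "qconv q n = real (n + 1) / qfact q (n + 1)"
proof (induction n)
  case 0
  show ?case by (simp add: qconv_def qfact_def)
next
  case (Suc n)
  have "qnum q (n + 2) * qconv q (Suc n) = real (n + 2) / qfact q (Suc n)"
    using qconv_Suc[OF q, of n] Suc by (simp add: add_divide_distrib[symmetric])
  then show ?case
    using qnum_nonzero[OF q, of "n + 2"] qfact_nonzero[OF q, of "Suc n"]
    by (simp add: qfact_Suc[of q "Suc n"] field_simps)
qed

lemma qderiv_const [simp]: "qderiv q (\<lambda>y. k) x = 0"
  by (simp add: qderiv_def)

lemma qderiv_cmult: "qderiv q (\<lambda>y. k * f y) x = k * qderiv q f x"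
  by (simp add: qderiv_def algebra_simps)

lemma qderiv_sum: "qderiv q (\<lambda>y. \<Sum>i\<in>S. f i y) x = (\<Sum>i\<in>S. qderiv q (f i) x)"
  by (simp only: qderiv_def sum_divide_distrib[symmetric] sum_subtractf)

lemma qderiv_add: "qderiv q (\<lambda>y. f y + g y) x = qderiv q f x + qderiv q g x"
  by (simp add: qderiv_def add_divide_distrib[symmetric])

lemma qderiv_cong_nonzero:
  assumes "q \<noteq> 0" "x \<noteq> 0" "\<And>y. y \<noteq> 0 \<Longrightarrow> f y = g y"
  shows "qderiv q f x = qderiv q g x"
  using assms by (simp add: qderiv_def)

lemma qderiv_power:
  assumes "q \<noteq> 1" "x \<noteq> 0"
  shows "qderiv q (\<lambda>y. y ^ n) x = qnum q n * x ^ (n - 1)"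
proof (cases n)
  case (Suc m)
  have "qderiv q (\<lambda>y. y ^ n) x = (q ^ n - 1) / (q - 1) * (x ^ n / x)"
    by (simp add: qderiv_def power_mult_distrib algebra_simps)
  then show ?thesis
    using Suc assms(2) by (simp add: qnum_def)
qed simp

lemma funpow_qderiv_cmult: "(qderiv q ^^ l) (\<lambda>y. k * f y) = (\<lambda>y. k * (qderiv q ^^ l) f y)"
  by (induction l) (simp_all add: qderiv_cmult)

lemma qderiv_qexp_fps_nth:
  assumes q: "q > 0" "q \<noteq> 1" and x: "x \<noteq> 0"
  shows "qderiv q (\<lambda>y. qexp_fps q (c * y) $ Suc m) x = c * qexp_fps q (c * x) $ m"
proof -
  have monomial: "(\<lambda>y. qexp_fps q (c * y) $ Suc m) = (\<lambda>y. c ^ Suc m / qfact q (Suc m) * y ^ Suc m)"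
    by (simp add: qexp_fps_def power_mult_distrib)
  have "qderiv q (\<lambda>y. qexp_fps q (c * y) $ Suc m) x
      = c ^ Suc m / qfact q (Suc m) * (qnum q (Suc m) * x ^ m)"
    unfolding monomial qderiv_cmult qderiv_power[OF q(2) x] by simp
  also have "\<dots> = c * qexp_fps q (c * x) $ m"
    using qnum_nonzero[OF q, of "Suc m"] by (simp add: qexp_fps_def qfact_Suc power_mult_distrib)
  finally show ?thesis .
qed

lemma qderiv_mult_qexp_fps_nth:
  assumes q: "q > 0" "q \<noteq> 1" and x: "x \<noteq> 0"
  shows "qderiv q (\<lambda>y. (A * qexp_fps q (c * y)) $ Suc n) x = c * (A * qexp_fps q (c * x)) $ n"
proof -
  have nth: "(A * qexp_fps q (c * y)) $ k = (\<Sum>i\<le>k. A $ (k - i) * qexp_fps q (c * y) $ i)" for y k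
    unfolding mult.commute[of A] fps_mult_nth atLeast0AtMost by (simp only: mult.commute)
  show ?thesis
    unfolding nth sum.atMost_Suc_shift
    by (simp only: qderiv_add qderiv_sum qderiv_cmult qderiv_qexp_fps_nth[OF q x])
      (simp add: sum_distrib_left qexp_fps_def qfact_def mult_ac)
qed

lemma funpow_qderiv_mult_qexp_fps_nth:
  assumes q: "q > 0" "q \<noteq> 1"
  shows "l \<le> n \<Longrightarrow> x \<noteq> 0 \<Longrightarrow>
    (qderiv q ^^ l) (\<lambda>y. (A * qexp_fps q (c * y)) $ n) x = c ^ l * (A * qexp_fps q (c * x)) $ (n - l)"
proof (induction l arbitrary: x)
  case (Suc l)
  have "(qderiv q ^^ Suc l) (\<lambda>y. (A * qexp_fps q (c * y)) $ n) x
      = qderiv q (\<lambda>y. c ^ l * (A * qexp_fps q (c * y)) $ Suc (n - Suc l)) x"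
    using q Suc by (auto simp: Suc_diff_Suc intro: qderiv_cong_nonzero)
  also have "\<dots> = c ^ Suc l * (A * qexp_fps q (c * x)) $ (n - Suc l)"
    by (simp add: qderiv_cmult qderiv_mult_qexp_fps_nth[OF q Suc.prems(2)])
  finally show ?case .
qed simp

lemma fps_deriv_qexp_fps:
  assumes q: "q > 0" "q \<noteq> 1"
  shows "fps_deriv (qexp_fps q c) =
    fps_const c * Abs_fps (\<lambda>l. ((1 - q) * c) ^ l / qnum q (l + 1)) * qexp_fps q c"
proof (rule fps_ext)
  fix n
  have "(fps_const c * Abs_fps (\<lambda>l. ((1 - q) * c) ^ l / qnum q (l + 1)) * qexp_fps q c) $ n
      = c * (\<Sum>l\<le>n. ((1 - q) * c) ^ l / qnum q (l + 1) * (c ^ (n - l) / qfact q (n - l)))"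
    (is "?rhs $ n = _")
    unfolding mult.assoc fps_mult_left_const_nth by (simp add: fps_mult_nth qexp_fps_def atLeast0AtMost)
  also have "\<dots> = c * c ^ n * qconv q n"
    unfolding qconv_def sum_distrib_left mult.assoc
  proof (intro arg_cong[where f = "(*) c"] sum.cong refl)
    fix l assume "l \<in> {..n}"
    then have c_pow: "c ^ l * c ^ (n - l) = c ^ n"
      by (simp flip: power_add)
    have "((1 - q) * c) ^ l / qnum q (l + 1) * (c ^ (n - l) / qfact q (n - l))
        = (c ^ l * c ^ (n - l)) * ((1 - q) ^ l / qnum q (l + 1) / qfact q (n - l))"
      by (simp add: power_mult_distrib)
    then show "((1 - q) * c) ^ l / qnum q (l + 1) * (c ^ (n - l) / qfact q (n - l))
        = c ^ n * ((1 - q) ^ l / qnum q (l + 1) / qfact q (n - l))"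
      unfolding c_pow .
  qed
  also have "\<dots> = fps_deriv (qexp_fps q c) $ n"
    by (simp add: qconv_eq[OF q] qexp_fps_def)
  finally show "fps_deriv (qexp_fps q c) $ n = ?rhs $ n" ..
qed

definition qHermite_gf :: "real \<Rightarrow> real \<Rightarrow> real fps" where
  "qHermite_gf q x = fps_compose (fps_exp 1) (- (fps_X ^ 2)) * qexp_fps q (qnum q 2 * x)"

lemma qHermite_eq_qHermite_gf: "qHermite N x q = qfact q N * qHermite_gf q x $ N"
  by (simp add: qHermite_def qHermite_gf_def)

lemma fps_deriv_exp_neg_square:
  "fps_deriv (fps_compose (fps_exp 1) (- (fps_X ^ 2))) =
    - (fps_const 2 * fps_X * fps_compose (fps_exp 1) (- (fps_X ^ 2)) :: real fps)"
  by (subst fps_compose_deriv) (simp_all add: fps_deriv_power)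

lemma fps_deriv_qHermite_gf:
  assumes q: "q > 0" "q \<noteq> 1"
  shows "fps_deriv (qHermite_gf q x) =
    - (fps_const 2 * fps_X * qHermite_gf q x)
    + fps_const (qnum q 2 * x) * Abs_fps (\<lambda>l. ((1 - q\<^sup>2) * x) ^ l / qnum q (l + 1)) * qHermite_gf q x"
proof -
  have ratio: "(1 - q\<^sup>2) * x = (1 - q) * (qnum q 2 * x)"
    using q by (simp add: qnum_two power2_eq_square algebra_simps)
  show ?thesis
    unfolding qHermite_gf_def fps_deriv_mult fps_deriv_exp_neg_square fps_deriv_qexp_fps[OF q] ratio
    by (simp add: algebra_simps)
qed

lemma qHermite_gf_nth_Suc:
  assumes q: "q > 0" "q \<noteq> 1" and N: "N \<ge> 1"
  shows "real (N + 1) * qHermite_gf q x $ (N + 1) =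
    qnum q 2 * x * qHermite_gf q x $ N
    - (2 + (q - 1) * qnum q 2 * x\<^sup>2) * qHermite_gf q x $ (N - 1)
    + qnum q 2 * x * (\<Sum>l=2..N. ((1 - q\<^sup>2) * x) ^ l / qnum q (l + 1) * qHermite_gf q x $ (N - l))"
proof -
  define w where "w l = ((1 - q\<^sup>2) * x) ^ l / qnum q (l + 1) * qHermite_gf q x $ (N - l)" for l
  have "real (N + 1) * qHermite_gf q x $ (N + 1) = fps_deriv (qHermite_gf q x) $ N"
    by simp
  also have "\<dots> = - 2 * qHermite_gf q x $ (N - 1) + qnum q 2 * x * (\<Sum>l\<le>N. w l)"
    unfolding fps_deriv_qHermite_gf[OF q] mult.assoc fps_add_nth fps_neg_nth fps_mult_left_const_nth
      fps_X_mult_nth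
    using N by (simp add: fps_mult_nth w_def atLeast0AtMost)
  also have "(\<Sum>l\<le>N. w l) = w 0 + w 1 + (\<Sum>l=2..N. w l)"
  proof -
    have "{..N} = {0, 1} \<union> {2..N}"
      using N by auto
    then show ?thesis
      by (simp add: sum.union_disjoint)
  qed
  also have "w 0 = qHermite_gf q x $ N"
    using q by (simp add: w_def qnum_def)
  also have "w 1 = (1 - q) * x * qHermite_gf q x $ (N - 1)"
  proof -
    have "qnum q (1 + 1) = q + 1" "q + 1 \<noteq> 0"
      using q qnum_two[of q] by (simp_all add: numeral_2_eq_2)
    then show ?thesis
      unfolding w_def by (simp add: power2_eq_square field_simps)
  qed
  finally show ?thesis
    by (simp add: w_def power2_eq_square algebra_simps)
qed

lemma funpow_qderiv_qHermite:
  assumes "q > 0" "q \<noteq> 1" "l \<le> N" "x \<noteq> 0"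
  shows "(qderiv q ^^ l) (\<lambda>y. qHermite N y q) x = qfact q N * qnum q 2 ^ l * qHermite_gf q x $ (N - l)"
  unfolding qHermite_eq_qHermite_gf funpow_qderiv_cmult qHermite_gf_def
  using funpow_qderiv_mult_qexp_fps_nth[OF assms] by simp

lemma sum_funpow_qderiv_qHermite:
  assumes q: "q > 0" "q \<noteq> 1" and x: "x \<noteq> 0"
  shows "(\<Sum>l=2..N. (1 - q ^ 2) ^ l * x ^ (l + 1) / (qnum q 2 ^ (l - 1) * qnum q (l + 1))
          * ((qderiv q ^^ l) (\<lambda>y. qHermite N y q)) x)
    = qfact q N * qnum q 2 * x * (\<Sum>l=2..N. ((1 - q\<^sup>2) * x) ^ l / qnum q (l + 1) * qHermite_gf q x $ (N - l))"
  unfolding sum_distrib_left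
proof (intro sum.cong refl)
  fix l assume l: "l \<in> {2..N}"
  have c: "qnum q 2 \<noteq> 0"
    using q qnum_two[of q] by simp
  from l have "qnum q 2 ^ l = qnum q 2 * qnum q 2 ^ (l - 1)"
    by (simp flip: power_Suc)
  then show "(1 - q ^ 2) ^ l * x ^ (l + 1) / (qnum q 2 ^ (l - 1) * qnum q (l + 1))
        * ((qderiv q ^^ l) (\<lambda>y. qHermite N y q)) x
      = qfact q N * qnum q 2 * x * (((1 - q\<^sup>2) * x) ^ l / qnum q (l + 1) * qHermite_gf q x $ (N - l))"
    unfolding power_mult_distrib using l c by (simp add: funpow_qderiv_qHermite[OF q _ x] field_simps)
qed

theorem mainTheorem5:
  fixes q x :: real and N :: nat
  assumes "q > 1" and "N \<ge> 1" and "x \<noteq> 0"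
  shows "qHermite (N + 1) x q =
    qnum q (N + 1) / real (N + 1) *
      ( qnum q 2 * x * qHermite N x q
        - (2 / qnum q 2 + (q - 1) * x ^ 2) * qderiv q (\<lambda>y. qHermite N y q) x
        + (\<Sum>l=2..N. (1 - q ^ 2) ^ l * x ^ (l + 1) / (qnum q 2 ^ (l - 1) * qnum q (l + 1))
              * ((qderiv q ^^ l) (\<lambda>y. qHermite N y q)) x))"
proof -
  have q: "q > 0" "q \<noteq> 1" and c: "qnum q 2 \<noteq> 0"
    using assms(1) qnum_two[of q] by auto
  let ?h = "\<lambda>k. qHermite_gf q x $ k"
  have first: "qderiv q (\<lambda>y. qHermite N y q) x = qfact q N * qnum q 2 * ?h (N - 1)"
    using funpow_qderiv_qHermite[OF q, of 1 N x] assms(2,3) by simp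
  have "qnum q 2 * x * (qfact q N * ?h N)
      - (2 / qnum q 2 + (q - 1) * x ^ 2) * (qfact q N * qnum q 2 * ?h (N - 1))
      + qfact q N * qnum q 2 * x * (\<Sum>l=2..N. ((1 - q\<^sup>2) * x) ^ l / qnum q (l + 1) * ?h (N - l))
    = qfact q N * (real (N + 1) * ?h (N + 1))"
    unfolding qHermite_gf_nth_Suc[OF q assms(2)] using c by (simp add: field_simps power2_eq_square)
  then show ?thesis
    unfolding sum_funpow_qderiv_qHermite[OF q assms(3)] first unfolding qHermite_eq_qHermite_gf
    by (simp add: qfact_Suc)
qed

end
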